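(* Let $m\ge2$, $q\in(0,1)$, let $\psi$ be a completely monotone Archimedean copula generator and $Z$ a positive random variable with Laplace transform $\psi(t)=\mathbb E[e^{-tZ}]$ and cdf $F_Z$. Define $$\gamma_{min}=\int\min_{k\in\{1,\dots,m\}}\left\{\frac{\exp(-z\psi^{-1}(kq/m))}{kq/m}\right\}dF_Z(z),\qquad g(x\mid z)=\frac{\exp(-zx)}{\psi(x)},\qquad z^*=\frac{\log m}{\psi^{-1}(q/m)-\psi^{-1}(q)}.$$ Then $$\gamma_{min}=1-\int_0^{z^*}\bigl(g(\psi^{-1}(q/m)\mid z)-g(\psi^{-1}(q)\mid z)\bigr)dF_Z(z)=1-\mathbb E\bigl[(g(\psi^{-1}(q/m)\mid Z)-g(\psi^{-1}(q)\mid Z))\mathbf 1_{[0,z^*]}(Z)\bigr].$$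
   Context: Completely monotone generator: $\psi:[0,\infty)\to[0,1]$, $\psi(0)=1$, $\lim_{x\to\infty}\psi(x)=0$, $(-1)^d\psi^{(d)}\ge0$ for all $d\in\mathbb N$; $\psi^{-1}$ is its inverse. *)

theory Defs
  imports "HOL-Probability.Probability"
begin

definition cm_generator :: "(real \<Rightarrow> real) \<Rightarrow> bool" where
  "cm_generator \<psi> \<longleftrightarrow>
     \<psi> 0 = 1 \<and> (\<forall>x\<ge>0. \<psi> x \<in> {0..1}) \<and> continuous_on {0..} \<psi> \<and>
     (\<psi> \<longlongrightarrow> 0) at_top \<and>
     (\<forall>d x. x > 0 \<longrightarrow> ((deriv ^^ d) \<psi> has_real_derivative (deriv ^^ Suc d) \<psi> x) (at x)) \<and>
     (\<forall>d x. x > 0 \<longrightarrow> (-1) ^ d * (deriv ^^ d) \<psi> x \<ge> 0)"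

definition gen_inv :: "(real \<Rightarrow> real) \<Rightarrow> real \<Rightarrow> real" where
  "gen_inv \<psi> u = (THE t. 0 \<le> t \<and> \<psi> t = u)"

definition gcond :: "(real \<Rightarrow> real) \<Rightarrow> real \<Rightarrow> real \<Rightarrow> real" where
  "gcond \<psi> x z = exp (- z * x) / \<psi> x"

end

theory Submission
  imports Defs
begin

text \<open>
  Since \<open>\<psi>\<close> is the Laplace transform of \<open>Z\<close>, it is log-convex, so for fixed \<open>z\<close> the function
  \<open>x \<mapsto> ln g(x | z) = -z x - ln \<psi>(x)\<close> is concave. The \<open>k\<close>-th term of the minimum defining
  \<open>\<gamma>\<^sub>m\<^sub>i\<^sub>n\<close> is \<open>g(\<psi>\<^sup>-\<^sup>1(kq/m) | z)\<close>, and all points \<open>\<psi>\<^sup>-\<^sup>1(kq/m)\<close> lie between \<open>\<psi>\<^sup>-\<^sup>1(q)\<close> and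
  \<open>\<psi>\<^sup>-\<^sup>1(q/m)\<close>; by concavity the minimum is attained at \<open>k = 1\<close> or \<open>k = m\<close>, and comparing these
  two terms shows that the switch happens exactly at \<open>z\<^sup>*\<close>. Finally
  \<open>E[g(x | Z)] = \<psi>(x)/\<psi>(x) = 1\<close> for every \<open>x \<ge> 0\<close>.
\<close>

locale laplace_transform_of_positive = prob_space M
  for M :: "'a measure" +
  fixes Z :: "'a \<Rightarrow> real" and \<psi> :: "real \<Rightarrow> real"
  assumes Z_measurable [measurable]: "Z \<in> borel_measurable M"
    and Z_pos: "AE \<omega> in M. Z \<omega> > 0"
    and laplace: "\<And>t. t \<ge> 0 \<Longrightarrow> \<psi> t = (\<integral>\<omega>. exp (- t * Z \<omega>) \<partial>M)"
begin

lemma integrable_exp_neg_Z: "t \<ge> 0 \<Longrightarrow> integrable M (\<lambda>\<omega>. exp (- t * Z \<omega>))"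
  by (rule integrable_const_bound[where B = 1])
    (use Z_pos in \<open>auto elim!: eventually_mono\<close>)

lemma psi_pos: "t \<ge> 0 \<Longrightarrow> \<psi> t > 0"
proof -
  assume t: "t \<ge> 0"
  have "(\<integral>\<omega>. 0 \<partial>M) < (\<integral>\<omega>. exp (- t * Z \<omega>) \<partial>M)"
    by (rule integral_less_AE_space) (use t integrable_exp_neg_Z emeasure_space_1 in auto)
  then show ?thesis
    using t by (simp add: laplace)
qed

lemma psi_strict_antimono: "strict_antimono_on {0..} \<psi>"
proof (rule monotone_onI)
  fix s t :: real
  assume st: "s \<in> {0..}" "t \<in> {0..}" "s < t"
  have "(\<integral>\<omega>. exp (- t * Z \<omega>) \<partial>M) < (\<integral>\<omega>. exp (- s * Z \<omega>) \<partial>M)"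
  proof (rule integral_less_AE_space)
    show "AE \<omega> in M. exp (- t * Z \<omega>) < exp (- s * Z \<omega>)"
      using Z_pos by eventually_elim (use st in auto)
  qed (use st integrable_exp_neg_Z emeasure_space_1 in auto)
  then show "\<psi> t < \<psi> s"
    using st by (simp add: laplace)
qed

lemma ln_psi_convex: "convex_on {0..} (\<lambda>t. ln (\<psi> t))"
proof (rule convex_onI)
  fix l a b :: real
  assume l: "0 < l" "l < 1" and ab: "a \<in> {0..}" "b \<in> {0..}"
  define s where "s = (1 - l) * a + l * b"
  define c where "c = (1 - l) * ln (\<psi> a) + l * ln (\<psi> b)"
  have s: "s \<ge> 0"
    using l ab by (simp add: s_def)
  have \<psi>ab: "\<psi> a > 0" "\<psi> b > 0"
    using ab psi_pos by auto
  \<comment> \<open>Convexity of \<open>exp\<close>, applied after normalising both exponentials by their means.\<close>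
  have pointwise: "exp (- s * z) \<le> exp c * ((1 - l) * (exp (- a * z) / \<psi> a) + l * (exp (- b * z) / \<psi> b))"
    for z
  proof -
    have "exp (- s * z) = exp c * exp ((1 - l) * (- a * z - ln (\<psi> a)) + l * (- b * z - ln (\<psi> b)))"
      unfolding c_def s_def mult_exp_exp by (simp add: algebra_simps)
    also have "\<dots> \<le> exp c * ((1 - l) * exp (- a * z - ln (\<psi> a)) + l * exp (- b * z - ln (\<psi> b)))"
      using convex_onD[OF exp_convex, of l "- a * z - ln (\<psi> a)" "- b * z - ln (\<psi> b)"] l
      by (intro mult_left_mono) auto
    finally show ?thesis
      using \<psi>ab by (simp add: exp_diff)
  qed
  have "\<psi> s \<le> (\<integral>\<omega>. exp c * ((1 - l) * (exp (- a * Z \<omega>) / \<psi> a) + l * (exp (- b * Z \<omega>) / \<psi> b)) \<partial>M)"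
    unfolding laplace[OF s]
    by (rule integral_mono) (use ab s pointwise integrable_exp_neg_Z in auto)
  also have "\<dots> = exp c"
    using ab \<psi>ab integrable_exp_neg_Z by (simp add: laplace)
  finally have "\<psi> s \<le> exp c" .
  then have "ln (\<psi> s) \<le> c"
    using psi_pos[OF s] by (metis ln_exp ln_le_cancel_iff exp_gt_zero)
  then show "ln (\<psi> ((1 - l) *\<^sub>R a + l *\<^sub>R b)) \<le> (1 - l) * ln (\<psi> a) + l * ln (\<psi> b)"
    by (simp add: s_def c_def)
qed simp

lemma ln_gcond: "x \<ge> 0 \<Longrightarrow> ln (gcond \<psi> x z) = - z * x - ln (\<psi> x)"
  using psi_pos[of x] by (simp add: gcond_def ln_div)

lemma gcond_ge_min:
  assumes "0 \<le> a" "a \<le> x" "x \<le> b"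
  shows "min (gcond \<psi> a z) (gcond \<psi> b z) \<le> gcond \<psi> x z"
proof -
  have "concave_on {a..b} (\<lambda>x. - z * x - ln (\<psi> x))"
    using assms(1)
    by (intro concave_on_diff concave_on_linorderI convex_on_subset[OF ln_psi_convex])
      (auto simp: algebra_simps)
  then have "concave_on {a..b} (\<lambda>x. ln (gcond \<psi> x z))"
    using assms(1) by (simp add: concave_on_iff ln_gcond)
  then have "min (ln (gcond \<psi> a z)) (ln (gcond \<psi> b z)) \<le> ln (gcond \<psi> x z)"
    using assms by (intro concave_on_ge_min) auto
  moreover have "gcond \<psi> y z > 0" if "y \<ge> 0" for y
    using that by (simp add: gcond_def psi_pos)
  ultimately show ?thesis
    using assms by (simp add: min_def split: if_splits)
qed

lemma gcond_le_gcond_iff: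
  assumes "0 \<le> a" "a < b"
  shows "gcond \<psi> a z \<le> gcond \<psi> b z \<longleftrightarrow> z \<le> ln (\<psi> a / \<psi> b) / (b - a)"
proof -
  have "gcond \<psi> a z \<le> gcond \<psi> b z \<longleftrightarrow> ln (gcond \<psi> a z) \<le> ln (gcond \<psi> b z)"
    using assms by (simp add: gcond_def psi_pos)
  also have "\<dots> \<longleftrightarrow> z * (b - a) \<le> ln (\<psi> a) - ln (\<psi> b)"
    using assms by (simp add: ln_gcond algebra_simps)
  finally show ?thesis
    using assms psi_pos[of a] psi_pos[of b] by (simp add: pos_le_divide_eq ln_div)
qed

lemma gcond_measurable [measurable]: "gcond \<psi> x \<in> borel_measurable borel"
  unfolding gcond_def by measurable

lemma integrable_gcond: "x \<ge> 0 \<Longrightarrow> integrable M (\<lambda>\<omega>. gcond \<psi> x (Z \<omega>))"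
  using integrable_exp_neg_Z[of x] by (simp add: gcond_def mult.commute)

lemma integral_gcond: "x \<ge> 0 \<Longrightarrow> (\<integral>\<omega>. gcond \<psi> x (Z \<omega>) \<partial>M) = 1"
  using laplace[of x] psi_pos[of x] by (simp add: gcond_def mult.commute)

lemma integral_gcond_switch:
  assumes "0 \<le> a" "0 \<le> b"
  shows "(\<integral>\<omega>. (if Z \<omega> \<le> c then gcond \<psi> a (Z \<omega>) else gcond \<psi> b (Z \<omega>)) \<partial>M)
    = 1 - (\<integral>\<omega>. (gcond \<psi> b (Z \<omega>) - gcond \<psi> a (Z \<omega>)) * indicator {0..c} (Z \<omega>) \<partial>M)"
proof -
  have switch_integrable:
    "integrable M (\<lambda>\<omega>. (gcond \<psi> b (Z \<omega>) - gcond \<psi> a (Z \<omega>)) * indicator {0..c} (Z \<omega>))"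
    using Bochner_Integration.integrable_diff[OF integrable_gcond integrable_gcond, OF assms(2,1)]
    by (rule Bochner_Integration.integrable_bound) (auto split: split_indicator)
  have "(\<integral>\<omega>. (if Z \<omega> \<le> c then gcond \<psi> a (Z \<omega>) else gcond \<psi> b (Z \<omega>)) \<partial>M)
    = (\<integral>\<omega>. gcond \<psi> b (Z \<omega>) - (gcond \<psi> b (Z \<omega>) - gcond \<psi> a (Z \<omega>)) * indicator {0..c} (Z \<omega>) \<partial>M)"
    by (rule integral_cong_AE) (use Z_pos in \<open>auto split: split_indicator\<close>)
  also have "\<dots> = (\<integral>\<omega>. gcond \<psi> b (Z \<omega>) \<partial>M)
      - (\<integral>\<omega>. (gcond \<psi> b (Z \<omega>) - gcond \<psi> a (Z \<omega>)) * indicator {0..c} (Z \<omega>) \<partial>M)"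
    by (rule Bochner_Integration.integral_diff[OF integrable_gcond[OF assms(2)] switch_integrable])
  finally show ?thesis
    using integral_gcond[OF assms(2)] by simp
qed

end

locale laplace_generator = laplace_transform_of_positive +
  assumes generator: "cm_generator \<psi>"
begin

lemma psi_attains:
  assumes "0 < u" "u \<le> 1"
  obtains t where "t \<ge> 0" "\<psi> t = u"
proof -
  have lim: "(\<psi> \<longlongrightarrow> 0) at_top" and cont: "continuous_on {0..} \<psi>" and \<psi>0: "\<psi> 0 = 1"
    using generator by (auto simp: cm_generator_def)
  obtain T where T: "\<And>x. x \<ge> T \<Longrightarrow> \<psi> x < u"
    using order_tendstoD(2)[OF lim \<open>0 < u\<close>] by (auto simp: eventually_at_top_linorder)
  have "continuous_on {0..max T 0} \<psi>"
    using cont by (rule continuous_on_subset) auto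
  then obtain t where "0 \<le> t" "\<psi> t = u"
    using IVT2'[of \<psi> "max T 0" u 0] T[of "max T 0"] assms \<psi>0 by force
  then show thesis ..
qed

lemma gen_inv_nonneg_and_psi:
  assumes "0 < u" "u \<le> 1"
  shows "gen_inv \<psi> u \<ge> 0 \<and> \<psi> (gen_inv \<psi> u) = u"
proof -
  obtain t where t: "t \<ge> 0" "\<psi> t = u"
    using psi_attains assms .
  have "gen_inv \<psi> u = t"
    unfolding gen_inv_def
  proof (rule the_equality)
    show "s = t" if "0 \<le> s \<and> \<psi> s = u" for s
      using that t psi_strict_antimono
      by (auto simp: strict_antimono_iff_antimono dest: inj_onD)
  qed (use t in auto)
  with t show ?thesis by simp
qed

lemma gen_inv_less_gen_inv_iff:
  assumes "0 < u" "u \<le> 1" "0 < v" "v \<le> 1"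
  shows "gen_inv \<psi> v < gen_inv \<psi> u \<longleftrightarrow> u < v"
  using assms gen_inv_nonneg_and_psi[of u] gen_inv_nonneg_and_psi[of v] psi_strict_antimono
  by (metis atLeast_iff monotone_onD not_less_iff_gr_or_eq)

lemma Min_levels_eq_min_endpoints:
  fixes m :: nat and q z :: real
  assumes "m \<ge> 1" "0 < q" "q \<le> 1"
  shows "Min ((\<lambda>k. exp (- z * gen_inv \<psi> (real k * q / real m)) / (real k * q / real m)) ` {1..m})
    = min (gcond \<psi> (gen_inv \<psi> q) z) (gcond \<psi> (gen_inv \<psi> (q / real m)) z)"
proof -
  define G where "G k = exp (- z * gen_inv \<psi> (real k * q / real m)) / (real k * q / real m)"
    for k :: nat
  have level: "q / real m \<le> real k * q / real m \<and> real k * q / real m \<le> q" if "k \<in> {1..m}" for k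
    using that assms by (auto simp: field_simps)
  have level_pos: "0 < real k * q / real m" if "k \<in> {1..m}" for k
    using that assms by auto
  have G_eq: "G k = gcond \<psi> (gen_inv \<psi> (real k * q / real m)) z" if "k \<in> {1..m}" for k
    using gen_inv_nonneg_and_psi[of "real k * q / real m"] level[OF that] level_pos[OF that] assms(3)
    by (simp add: G_def gcond_def)
  have "Min (G ` {1..m}) = min (G m) (G 1)"
  proof (rule Min_eqI)
    fix y assume "y \<in> G ` {1..m}"
    then obtain k where k: "k \<in> {1..m}" and y: "y = G k" by auto
    define u where "u = real k * q / real m"
    have u: "q / real m \<le> u" "u \<le> q" "0 < u"
      using level[OF k] level_pos[OF k] unfolding u_def by auto
    have "gen_inv \<psi> q \<le> gen_inv \<psi> u" "gen_inv \<psi> u \<le> gen_inv \<psi> (q / real m)"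
      using u assms gen_inv_less_gen_inv_iff[of q u] gen_inv_less_gen_inv_iff[of u "q / real m"]
      by (simp_all add: not_less[symmetric])
    then have "min (G m) (G 1) \<le> gcond \<psi> (gen_inv \<psi> u) z"
      using G_eq[of 1] G_eq[of m] gen_inv_nonneg_and_psi[of q] assms
      by (simp add: gcond_ge_min)
    then show "min (G m) (G 1) \<le> y"
      using G_eq[OF k] by (simp add: y u_def)
  qed (use assms in \<open>auto simp: min_def\<close>)
  then show ?thesis
    using G_eq[of 1] G_eq[of m] assms by (simp add: G_def)
qed

end

theorem lemma1:
  fixes M :: "'a measure" and Z :: "'a \<Rightarrow> real" and \<psi> :: "real \<Rightarrow> real"
    and m :: nat and q :: real
  assumes "prob_space M"
    and "Z \<in> borel_measurable M"
    and "AE \<omega> in M. Z \<omega> > 0"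
    and "cm_generator \<psi>"
    and "\<And>t. t \<ge> 0 \<Longrightarrow> \<psi> t = (\<integral>\<omega>. exp (- t * Z \<omega>) \<partial>M)"
    and "m \<ge> 2" and "0 < q" and "q < 1"
  shows
    "(let zstar = ln (real m) / (gen_inv \<psi> (q / real m) - gen_inv \<psi> q);
          \<gamma>min = (\<integral>z. Min ((\<lambda>k. exp (- z * gen_inv \<psi> (real k * q / real m)) / (real k * q / real m)) ` {1..m})
                    \<partial>(distr M borel Z))
      in \<gamma>min = 1 - (LINT z:{0..zstar}|distr M borel Z.
                        gcond \<psi> (gen_inv \<psi> (q / real m)) z - gcond \<psi> (gen_inv \<psi> q) z)
       \<and> \<gamma>min = 1 - (\<integral>\<omega>. (gcond \<psi> (gen_inv \<psi> (q / real m)) (Z \<omega>) - gcond \<psi> (gen_inv \<psi> q) (Z \<omega>))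
                         * indicator {0..zstar} (Z \<omega>) \<partial>M))"
proof -
  interpret laplace_generator M Z \<psi>
    using assms(1-5)
    by (simp add: laplace_generator_def laplace_generator_axioms_def
        laplace_transform_of_positive_def laplace_transform_of_positive_axioms_def)
  define x1 where "x1 = gen_inv \<psi> (q / real m)"
  define xm where "xm = gen_inv \<psi> q"
  define zstar where "zstar = ln (real m) / (x1 - xm)"
  have q_div: "0 < q / real m" "q / real m < q"
    using assms(6-8) by (auto simp: field_simps)
  have x1: "x1 \<ge> 0" "\<psi> x1 = q / real m" and xm: "xm \<ge> 0" "\<psi> xm = q" and "xm < x1"
    using gen_inv_nonneg_and_psi[of "q / real m"] gen_inv_nonneg_and_psi[of q]
      gen_inv_less_gen_inv_iff[of "q / real m" q] q_div assms(7,8)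
    by (auto simp: x1_def xm_def)
  then have min_eq: "min (gcond \<psi> xm z) (gcond \<psi> x1 z) = (if z \<le> zstar then gcond \<psi> xm z else gcond \<psi> x1 z)"
    for z
    using gcond_le_gcond_iff[of xm x1 z] assms(7) q_div by (simp add: zstar_def min_def)
  have Min_eq: "Min ((\<lambda>k. exp (- z * gen_inv \<psi> (real k * q / real m)) / (real k * q / real m)) ` {1..m})
      = (if z \<le> zstar then gcond \<psi> xm z else gcond \<psi> x1 z)" for z
    using Min_levels_eq_min_endpoints[of m q z] min_eq[of z] assms(6-8) by (simp add: x1_def xm_def)
  have "(\<integral>z. Min ((\<lambda>k. exp (- z * gen_inv \<psi> (real k * q / real m)) / (real k * q / real m)) ` {1..m})
      \<partial>distr M borel Z) = (\<integral>\<omega>. (if Z \<omega> \<le> zstar then gcond \<psi> xm (Z \<omega>) else gcond \<psi> x1 (Z \<omega>)) \<partial>M)"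
    unfolding Min_eq by (rule integral_distr) auto
  also have "\<dots> = 1 - (\<integral>\<omega>. (gcond \<psi> x1 (Z \<omega>) - gcond \<psi> xm (Z \<omega>)) * indicator {0..zstar} (Z \<omega>) \<partial>M)"
    by (rule integral_gcond_switch) (use x1 xm in auto)
  finally show ?thesis
    unfolding Let_def set_lebesgue_integral_def
    by (simp add: integral_distr mult.commute flip: x1_def xm_def zstar_def)
qed

end
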